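(* Consider the model $Y=g(X)+\varepsilon$ with $E[\varepsilon\mid Z]=0$ a.s. and $g\in L_2(X)$, where $X=(1,X_2)'$ and $X_2\in\{0,1\}$ is a binary (possibly endogenous) variable. Assume $E[Y^2]<\infty$, $0<\bar\pi<1$ and $\mathrm{var}(\pi(Z))>0$. Then there exists $h\in L_2(Z)^2$ with $E[h(Z)\mid X]=X$ a.s. Moreover, the minimum-norm solution $h_0$ of this equation has second component (the one corresponding to $X_2$) $$h_0(z)=\alpha+\gamma\pi(z),\qquad \gamma=\frac{\bar\pi(1-\bar\pi)}{\mathrm{var}(\pi(Z))},\quad \alpha=\bar\pi(1-\gamma).$$ Furthermore, the OLIVA $\beta=E[XX']^{-1}E[Xg(X)]$ equals $\beta=(c^{IV}_\pi,\alpha^{IV}_\pi)'$, where $$\alpha^{IV}_\pi=\frac{\mathrm{Cov}(Y,\pi(Z))}{\mathrm{Cov}(X_2,\pi(Z))},\qquad c^{IV}_\pi=E[Y]-\alpha^{IV}_\pi\bar\pi .$$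
   Context: $\pi(z)=\Pr(X_2=1\mid Z=z)$ is the propensity score, and $\bar\pi=\Pr(X_2=1)$. $L_2(V)$ denotes the square-integrable measurable functions of $V$. The minimum-norm solution is the solution of minimal $L_2(Z)$-norm, taken componentwise. *)

theory Defs
  imports "HOL-Analysis.Analysis" "HOL-Probability.Probability"
begin

definition Xvec :: "('a \<Rightarrow> real) \<Rightarrow> 'a \<Rightarrow> real^2" where
  "Xvec X2 \<omega> = vector [1, X2 \<omega>]"

definition cexpX :: "'a measure \<Rightarrow> ('a \<Rightarrow> real) \<Rightarrow> ('a \<Rightarrow> real) \<Rightarrow> 'a \<Rightarrow> real" where
  "cexpX M X2 f = real_cond_exp M (vimage_algebra (space M) (Xvec X2) borel) f"

definition cexpZ :: "'a measure \<Rightarrow> ('a \<Rightarrow> 'b) \<Rightarrow> 'b measure \<Rightarrow> ('a \<Rightarrow> real) \<Rightarrow> 'a \<Rightarrow> real" where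
  "cexpZ M Z N f = real_cond_exp M (vimage_algebra (space M) Z N) f"

definition L2Z :: "'a measure \<Rightarrow> ('a \<Rightarrow> 'b) \<Rightarrow> 'b measure \<Rightarrow> ('b \<Rightarrow> real) \<Rightarrow> bool" where
  "L2Z M Z N h \<longleftrightarrow> h \<in> borel_measurable N \<and> integrable M (\<lambda>\<omega>. (h (Z \<omega>))\<^sup>2)"

definition solves :: "'a measure \<Rightarrow> ('a \<Rightarrow> real) \<Rightarrow> ('a \<Rightarrow> 'b) \<Rightarrow> 'b measure
    \<Rightarrow> ('a \<Rightarrow> real) \<Rightarrow> ('b \<Rightarrow> real) \<Rightarrow> bool" where
  "solves M X2 Z N T h \<longleftrightarrow> L2Z M Z N h \<and> (AE \<omega> in M. cexpX M X2 (\<lambda>\<omega>. h (Z \<omega>)) \<omega> = T \<omega>)"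

definition min_norm_solution :: "'a measure \<Rightarrow> ('a \<Rightarrow> real) \<Rightarrow> ('a \<Rightarrow> 'b) \<Rightarrow> 'b measure
    \<Rightarrow> ('a \<Rightarrow> real) \<Rightarrow> ('b \<Rightarrow> real) \<Rightarrow> bool" where
  "min_norm_solution M X2 Z N T h \<longleftrightarrow> solves M X2 Z N T h \<and>
     (\<forall>h'. solves M X2 Z N T h' \<longrightarrow>
        (\<integral>\<omega>. (h (Z \<omega>))\<^sup>2 \<partial>M) \<le> (\<integral>\<omega>. (h' (Z \<omega>))\<^sup>2 \<partial>M))"

definition cov :: "'a measure \<Rightarrow> ('a \<Rightarrow> real) \<Rightarrow> ('a \<Rightarrow> real) \<Rightarrow> real" where
  "cov M U V = (\<integral>\<omega>. (U \<omega> - (\<integral>x. U x \<partial>M)) * (V \<omega> - (\<integral>x. V x \<partial>M)) \<partial>M)"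

definition var :: "'a measure \<Rightarrow> ('a \<Rightarrow> real) \<Rightarrow> real" where
  "var M U = (\<integral>\<omega>. (U \<omega> - (\<integral>x. U x \<partial>M))\<^sup>2 \<partial>M)"

end

theory Submission
  imports Defs
begin

(* As X2 is binary, the sigma-algebra of X is generated by the event {X2 = 1}, so E[h(Z) | X] = X2
   amounts to the two moment conditions E[h(Z)] = pibar and E[X2 h(Z)] = pibar, and by iterated
   expectations the second one reads E[h(Z) pi(Z)] = pibar. The affine function alpha + gamma pi
   satisfies both, and every solution h has the same inner product (alpha + gamma) pibar with it;
   so alpha + gamma pi is orthogonal to the difference of any two solutions and, by Pythagoras,
   it is the unique minimum-norm solution. Likewise g(X) = g(1,0) + (g(1,1) - g(1,0)) X2 is affine
   in X2, which makes its OLS coefficients these two numbers; and since the structural error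
   satisfies E[eps] = E[eps pi(Z)] = 0 while Cov(X2, pi(Z)) = var(pi(Z)), the IV ratio recovers the
   same slope. *)

lemma (in prob_space) cov_eq_integral_mult_diff:
  assumes "integrable M U" "integrable M V" "integrable M (\<lambda>x. U x * V x)"
  shows "cov M U V = (\<integral>x. U x * V x \<partial>M) - (\<integral>x. U x \<partial>M) * (\<integral>x. V x \<partial>M)"
proof -
  define a b where "a = (\<integral>x. U x \<partial>M)" and "b = (\<integral>x. V x \<partial>M)"
  have "cov M U V = (\<integral>x. U x * V x - b * U x - a * V x + a * b \<partial>M)"
    unfolding cov_def a_def[symmetric] b_def[symmetric]
    by (rule Bochner_Integration.integral_cong) (auto simp: algebra_simps)
  also have "\<dots> = (\<integral>x. U x * V x \<partial>M) - a * b"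
    using assms by (simp add: a_def b_def prob_space)
  finally show ?thesis by (simp add: a_def b_def)
qed

lemma var_eq_cov: "var M U = cov M U U"
  unfolding var_def cov_def by (simp add: power2_eq_square)

lemma integrable_mult_bounded:
  fixes f g :: "'a \<Rightarrow> real"
  assumes "integrable M f" "g \<in> borel_measurable M" "AE x in M. \<bar>g x\<bar> \<le> c"
  shows "integrable M (\<lambda>x. f x * g x)"
proof (rule Bochner_Integration.integrable_bound[of _ "\<lambda>x. c * f x"])
  show "integrable M (\<lambda>x. c * f x)" using assms(1) by simp
  show "(\<lambda>x. f x * g x) \<in> borel_measurable M"
    using assms(1,2) by (simp add: borel_measurable_integrable)
  show "AE x in M. norm (f x * g x) \<le> norm (c * f x)"
    using assms(3) by eventually_elim (simp add: abs_mult mult_left_mono mult.commute[of c])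
qed

lemma integrable_mult_if_square_integrable:
  fixes f g :: "'a \<Rightarrow> real"
  assumes [measurable]: "f \<in> borel_measurable M" "g \<in> borel_measurable M"
    and "integrable M (\<lambda>x. (f x)\<^sup>2)" "integrable M (\<lambda>x. (g x)\<^sup>2)"
  shows "integrable M (\<lambda>x. f x * g x)"
proof (rule Bochner_Integration.integrable_bound[of _ "\<lambda>x. (f x)\<^sup>2 + (g x)\<^sup>2"])
  show "integrable M (\<lambda>x. (f x)\<^sup>2 + (g x)\<^sup>2)" using assms(3,4) by simp
  have "\<bar>f x * g x\<bar> \<le> (f x)\<^sup>2 + (g x)\<^sup>2" for x
  proof -
    have "0 \<le> (\<bar>f x\<bar> - \<bar>g x\<bar>)\<^sup>2" by simp
    then have "2 * \<bar>f x * g x\<bar> \<le> (f x)\<^sup>2 + (g x)\<^sup>2" by (simp add: power2_diff abs_mult)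
    then show ?thesis by simp
  qed
  then show "AE x in M. norm (f x * g x) \<le> norm ((f x)\<^sup>2 + (g x)\<^sup>2)" by simp
qed measurable

lemma integral_square_diff_if_orthogonal:
  fixes f h :: "'a \<Rightarrow> real"
  assumes [measurable]: "f \<in> borel_measurable M" "h \<in> borel_measurable M"
    and "integrable M (\<lambda>x. (f x)\<^sup>2)" "integrable M (\<lambda>x. (h x)\<^sup>2)"
    and orth: "(\<integral>x. f x * h x \<partial>M) = (\<integral>x. (h x)\<^sup>2 \<partial>M)"
  shows "integrable M (\<lambda>x. (f x - h x)\<^sup>2)"
    and "(\<integral>x. (f x - h x)\<^sup>2 \<partial>M) = (\<integral>x. (f x)\<^sup>2 \<partial>M) - (\<integral>x. (h x)\<^sup>2 \<partial>M)"
proof -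
  have fh: "integrable M (\<lambda>x. f x * h x)"
    using integrable_mult_if_square_integrable assms(1-4) by blast
  have eq: "(\<lambda>x. (f x - h x)\<^sup>2) = (\<lambda>x. (f x)\<^sup>2 - 2 * (f x * h x) + (h x)\<^sup>2)"
    by (simp add: power2_diff algebra_simps)
  show "integrable M (\<lambda>x. (f x - h x)\<^sup>2)"
    unfolding eq using assms(3,4) fh by simp
  show "(\<integral>x. (f x - h x)\<^sup>2 \<partial>M) = (\<integral>x. (f x)\<^sup>2 \<partial>M) - (\<integral>x. (h x)\<^sup>2 \<partial>M)"
    unfolding eq using assms(3,4) fh orth by simp
qed

lemma matrix_inv_mult_vector_cancel:
  fixes A :: "'a::field ^'n^'n"
  assumes "invertible A"
  shows "matrix_inv A *v (A *v x) = x"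
proof -
  have "matrix_inv A ** A = mat 1"
    using assms unfolding invertible_def matrix_inv_def by (rule someI2_ex) simp
  then show ?thesis
    by (simp add: matrix_vector_mul_assoc)
qed

lemma (in sigma_finite_subalgebra) integral_mult_eq_0_if_real_cond_exp_eq_0:
  assumes "AE x in M. real_cond_exp M F f x = 0" "integrable M (\<lambda>x. g x * f x)"
    and "g \<in> borel_measurable F" "f \<in> borel_measurable M"
  shows "(\<integral>x. g x * f x \<partial>M) = 0"
proof -
  have "(\<integral>x. g x * f x \<partial>M) = (\<integral>x. g x * real_cond_exp M F f x \<partial>M)"
    using real_cond_exp_intg(2)[OF assms(2-4)] by simp
  also have "\<dots> = 0"
    using assms(1) by (intro integral_eq_zero_AE) auto
  finally show ?thesis .
qed

lemma min_norm_solution_if_orthogonal: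
  assumes Z [measurable]: "Z \<in> measurable M N" and sol: "solves M X2 Z N T h0"
    and orth: "\<And>h. solves M X2 Z N T h \<Longrightarrow>
      (\<integral>\<omega>. h (Z \<omega>) * h0 (Z \<omega>) \<partial>M) = (\<integral>\<omega>. (h0 (Z \<omega>))\<^sup>2 \<partial>M)"
  shows "min_norm_solution M X2 Z N T h0"
    and "min_norm_solution M X2 Z N T h \<Longrightarrow> AE \<omega> in M. h (Z \<omega>) = h0 (Z \<omega>)"
proof -
  have pythagoras: "integrable M (\<lambda>\<omega>. (h (Z \<omega>) - h0 (Z \<omega>))\<^sup>2)"
      "(\<integral>\<omega>. (h (Z \<omega>) - h0 (Z \<omega>))\<^sup>2 \<partial>M)
         = (\<integral>\<omega>. (h (Z \<omega>))\<^sup>2 \<partial>M) - (\<integral>\<omega>. (h0 (Z \<omega>))\<^sup>2 \<partial>M)"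
    if "solves M X2 Z N T h" for h
  proof -
    have [measurable]: "h \<in> borel_measurable N" "h0 \<in> borel_measurable N"
      using that sol by (simp_all add: solves_def L2Z_def)
    show "integrable M (\<lambda>\<omega>. (h (Z \<omega>) - h0 (Z \<omega>))\<^sup>2)"
      "(\<integral>\<omega>. (h (Z \<omega>) - h0 (Z \<omega>))\<^sup>2 \<partial>M)
         = (\<integral>\<omega>. (h (Z \<omega>))\<^sup>2 \<partial>M) - (\<integral>\<omega>. (h0 (Z \<omega>))\<^sup>2 \<partial>M)"
      using integral_square_diff_if_orthogonal[OF _ _ _ _ orth[OF that]] that sol
      by (simp_all add: solves_def L2Z_def)
  qed
  have nonneg: "0 \<le> (\<integral>\<omega>. (h (Z \<omega>) - h0 (Z \<omega>))\<^sup>2 \<partial>M)" for h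
    by (rule integral_nonneg_AE) simp
  have "(\<integral>\<omega>. (h0 (Z \<omega>))\<^sup>2 \<partial>M) \<le> (\<integral>\<omega>. (h (Z \<omega>))\<^sup>2 \<partial>M)"
    if "solves M X2 Z N T h" for h
    using pythagoras(2)[OF that] nonneg[of h] by linarith
  with sol show "min_norm_solution M X2 Z N T h0"
    unfolding min_norm_solution_def by blast
  assume "min_norm_solution M X2 Z N T h"
  then have h: "solves M X2 Z N T h"
      and "(\<integral>\<omega>. (h (Z \<omega>))\<^sup>2 \<partial>M) \<le> (\<integral>\<omega>. (h0 (Z \<omega>))\<^sup>2 \<partial>M)"
    using sol by (simp_all add: min_norm_solution_def)
  then have "(\<integral>\<omega>. (h (Z \<omega>) - h0 (Z \<omega>))\<^sup>2 \<partial>M) = 0"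
    using pythagoras(2)[OF h] nonneg[of h] by linarith
  then have "AE \<omega> in M. (h (Z \<omega>) - h0 (Z \<omega>))\<^sup>2 = 0"
    using integral_nonneg_eq_0_iff_AE[OF pythagoras(1)[OF h]] by simp
  then show "AE \<omega> in M. h (Z \<omega>) = h0 (Z \<omega>)"
    by eventually_elim simp
qed

locale binary_treatment = prob_space M for M :: "'a measure" +
  fixes N :: "'b measure" and X2 :: "'a \<Rightarrow> real" and Z :: "'a \<Rightarrow> 'b" and \<pi> :: "'b \<Rightarrow> real"
  assumes X2_measurable [measurable]: "X2 \<in> borel_measurable M"
    and X2_binary: "\<forall>\<omega>\<in>space M. X2 \<omega> \<in> {0, 1}"
    and Z_measurable [measurable]: "Z \<in> measurable M N"
    and \<pi>_measurable [measurable]: "\<pi> \<in> borel_measurable N"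
    and propensity_score:
      "AE \<omega> in M. \<pi> (Z \<omega>) = cexpZ M Z N (\<lambda>\<omega>. if X2 \<omega> = 1 then 1 else 0) \<omega>"
begin

definition treated_prob :: real where
  "treated_prob = prob {\<omega> \<in> space M. X2 \<omega> = 1}"

lemma Xvec_measurable [measurable]: "Xvec X2 \<in> borel_measurable M"
proof -
  have "Xvec X2 = (\<lambda>\<omega>. vector [1, 0] + X2 \<omega> *\<^sub>R vector [0, 1])"
    by (auto simp: Xvec_def vec_eq_iff forall_2)
  then show ?thesis by simp
qed

sublocale given_X: finite_measure_subalgebra M "vimage_algebra (space M) (Xvec X2) borel"
  by unfold_locales (simp add: subalgebra_def sets_image_in_sets)

sublocale given_Z: finite_measure_subalgebra M "vimage_algebra (space M) Z N"
  by unfold_locales (simp add: subalgebra_def sets_image_in_sets)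

lemma X2_measurable_given_X [measurable]:
  "X2 \<in> borel_measurable (vimage_algebra (space M) (Xvec X2) borel)"
proof -
  have "Xvec X2 \<in> measurable (vimage_algebra (space M) (Xvec X2) borel) borel"
    by (rule measurable_vimage_algebra1) simp
  then have "(\<lambda>\<omega>. Xvec X2 \<omega> \<bullet> axis 2 1) \<in> borel_measurable (vimage_algebra (space M) (Xvec X2) borel)"
    by measurable
  then show ?thesis by (simp add: Xvec_def inner_axis)
qed

lemma measurable_comp_Z_given_Z:
  "h \<in> borel_measurable N \<Longrightarrow> (\<lambda>\<omega>. h (Z \<omega>)) \<in> borel_measurable (vimage_algebra (space M) Z N)"
  by (rule measurable_compose[OF measurable_vimage_algebra1]) (use measurable_space[OF Z_measurable] in auto)

lemma abs_X2_le_1: "AE \<omega> in M. \<bar>X2 \<omega>\<bar> \<le> 1"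
  using X2_binary by (intro AE_I2) auto

lemma integrable_X2 [simp]: "integrable M X2"
  by (rule Bochner_Integration.integrable_bound[of _ "\<lambda>_. 1::real"]) (use abs_X2_le_1 in auto)

lemma integral_X2: "expectation X2 = treated_prob"
proof -
  have "expectation X2 = (\<integral>\<omega>. indicator {\<omega> \<in> space M. X2 \<omega> = 1} \<omega> \<partial>M)"
    by (rule Bochner_Integration.integral_cong) (use X2_binary in \<open>auto simp: indicator_def\<close>)
  then show ?thesis by (simp add: treated_prob_def)
qed

lemma integrable_X2_square: "integrable M (\<lambda>\<omega>. X2 \<omega> * X2 \<omega>)"
  by (rule integrable_mult_bounded[OF integrable_X2 X2_measurable abs_X2_le_1])

lemma integral_X2_square: "(\<integral>\<omega>. X2 \<omega> * X2 \<omega> \<partial>M) = treated_prob"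
  unfolding integral_X2[symmetric]
  by (rule Bochner_Integration.integral_cong) (use X2_binary in auto)

lemma propensity_eq_cond_exp:
  "AE \<omega> in M. \<pi> (Z \<omega>) = real_cond_exp M (vimage_algebra (space M) Z N) X2 \<omega>"
proof -
  have "AE \<omega> in M. real_cond_exp M (vimage_algebra (space M) Z N) (\<lambda>\<omega>. if X2 \<omega> = 1 then 1 else 0) \<omega>
      = real_cond_exp M (vimage_algebra (space M) Z N) X2 \<omega>"
    by (rule given_Z.real_cond_exp_cong) (use X2_binary in auto)
  with propensity_score show ?thesis
    unfolding cexpZ_def by eventually_elim simp
qed

lemma propensity_bounds: "AE \<omega> in M. 0 \<le> \<pi> (Z \<omega>) \<and> \<pi> (Z \<omega>) \<le> 1"
proof -
  have "AE \<omega> in M. 0 \<le> real_cond_exp M (vimage_algebra (space M) Z N) X2 \<omega>"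
    using X2_binary by (intro given_Z.real_cond_exp_ge_c AE_I2) auto
  moreover have "AE \<omega> in M. real_cond_exp M (vimage_algebra (space M) Z N) X2 \<omega> \<le> 1"
    using X2_binary by (intro given_Z.real_cond_exp_le_c AE_I2) auto
  ultimately show ?thesis
    using propensity_eq_cond_exp by eventually_elim simp
qed

lemma abs_propensity_le_1: "AE \<omega> in M. \<bar>\<pi> (Z \<omega>)\<bar> \<le> 1"
  using propensity_bounds by eventually_elim simp

lemma integrable_propensity [simp]: "integrable M (\<lambda>\<omega>. \<pi> (Z \<omega>))"
  by (rule Bochner_Integration.integrable_bound[of _ "\<lambda>_. 1::real"])
    (use abs_propensity_le_1 in auto)

lemma integral_mult_X2_eq_mult_propensity:
  assumes [measurable]: "h \<in> borel_measurable N" and "integrable M (\<lambda>\<omega>. h (Z \<omega>))"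
  shows "(\<integral>\<omega>. h (Z \<omega>) * X2 \<omega> \<partial>M) = (\<integral>\<omega>. h (Z \<omega>) * \<pi> (Z \<omega>) \<partial>M)"
proof -
  have "integrable M (\<lambda>\<omega>. h (Z \<omega>) * X2 \<omega>)"
    using integrable_mult_bounded[OF assms(2) X2_measurable abs_X2_le_1] .
  then have "(\<integral>\<omega>. h (Z \<omega>) * X2 \<omega> \<partial>M)
      = (\<integral>\<omega>. h (Z \<omega>) * real_cond_exp M (vimage_algebra (space M) Z N) X2 \<omega> \<partial>M)"
    by (intro given_Z.real_cond_exp_intg(2)[symmetric] measurable_comp_Z_given_Z) simp_all
  also have "\<dots> = (\<integral>\<omega>. h (Z \<omega>) * \<pi> (Z \<omega>) \<partial>M)"
    by (rule integral_cong_AE) (use propensity_eq_cond_exp in auto)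
  finally show ?thesis .
qed

lemma integral_propensity: "(\<integral>\<omega>. \<pi> (Z \<omega>) \<partial>M) = treated_prob"
proof -
  have "(\<integral>\<omega>. 1 * X2 \<omega> \<partial>M) = (\<integral>\<omega>. 1 * \<pi> (Z \<omega>) \<partial>M)"
    by (rule integral_mult_X2_eq_mult_propensity) simp_all
  then show ?thesis by (simp add: integral_X2)
qed

lemma integrable_propensity_square: "integrable M (\<lambda>\<omega>. \<pi> (Z \<omega>) * \<pi> (Z \<omega>))"
  by (rule integrable_mult_bounded[OF integrable_propensity _ abs_propensity_le_1]) simp

lemma integral_propensity_square:
  "(\<integral>\<omega>. \<pi> (Z \<omega>) * \<pi> (Z \<omega>) \<partial>M) = var M (\<lambda>\<omega>. \<pi> (Z \<omega>)) + treated_prob\<^sup>2"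
proof -
  from cov_eq_integral_mult_diff[OF integrable_propensity integrable_propensity
      integrable_propensity_square]
  show ?thesis
    by (simp add: var_eq_cov integral_propensity power2_eq_square)
qed

lemma integrable_X2_mult_propensity: "integrable M (\<lambda>\<omega>. X2 \<omega> * \<pi> (Z \<omega>))"
  by (rule integrable_mult_bounded[OF integrable_X2 _ abs_propensity_le_1]) simp

lemma integral_X2_mult_propensity:
  "(\<integral>\<omega>. X2 \<omega> * \<pi> (Z \<omega>) \<partial>M) = var M (\<lambda>\<omega>. \<pi> (Z \<omega>)) + treated_prob\<^sup>2"
  using integral_mult_X2_eq_mult_propensity[OF \<pi>_measurable integrable_propensity]
  by (simp only: mult.commute integral_propensity_square)

lemma cov_X2_propensity: "cov M X2 (\<lambda>\<omega>. \<pi> (Z \<omega>)) = var M (\<lambda>\<omega>. \<pi> (Z \<omega>))"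
  using cov_eq_integral_mult_diff[OF integrable_X2 integrable_propensity
      integrable_X2_mult_propensity]
  by (simp add: integral_X2 integral_propensity integral_X2_mult_propensity power2_eq_square)

lemma set_integral_Xvec_preimage:
  assumes f: "integrable M f"
  shows "(\<integral>\<omega>\<in>Xvec X2 -` B \<inter> space M. f \<omega> \<partial>M)
    = indicator B (vector [1, 1] :: real^2) * (\<integral>\<omega>. X2 \<omega> * f \<omega> \<partial>M)
      + indicator B (vector [1, 0] :: real^2) * ((\<integral>\<omega>. f \<omega> \<partial>M) - (\<integral>\<omega>. X2 \<omega> * f \<omega> \<partial>M))"
proof -
  have X2f: "integrable M (\<lambda>\<omega>. X2 \<omega> * f \<omega>)"
    using integrable_mult_bounded[OF f X2_measurable abs_X2_le_1] by (simp add: mult.commute)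
  have "(\<integral>\<omega>\<in>Xvec X2 -` B \<inter> space M. f \<omega> \<partial>M)
      = (\<integral>\<omega>. indicator B (vector [1, 1] :: real^2) * (X2 \<omega> * f \<omega>)
          + indicator B (vector [1, 0] :: real^2) * (f \<omega> - X2 \<omega> * f \<omega>) \<partial>M)"
    unfolding set_lebesgue_integral_def
    by (rule Bochner_Integration.integral_cong) (use X2_binary in \<open>auto simp: Xvec_def indicator_def\<close>)
  then show ?thesis
    using f X2f by simp
qed

lemma cond_exp_given_X_eq_X2_iff:
  assumes f [measurable]: "integrable M f"
  shows "(AE \<omega> in M. cexpX M X2 f \<omega> = X2 \<omega>)
    \<longleftrightarrow> (\<integral>\<omega>. f \<omega> \<partial>M) = treated_prob \<and> (\<integral>\<omega>. X2 \<omega> * f \<omega> \<partial>M) = treated_prob"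
proof
  assume ae: "AE \<omega> in M. cexpX M X2 f \<omega> = X2 \<omega>"
  have "(\<integral>\<omega>. f \<omega> \<partial>M) = (\<integral>\<omega>. cexpX M X2 f \<omega> \<partial>M)"
    unfolding cexpX_def using given_X.real_cond_exp_int(2)[OF f] by simp
  also have "\<dots> = treated_prob"
    unfolding integral_X2[symmetric] by (rule integral_cong_AE) (use ae in \<open>simp_all add: cexpX_def\<close>)
  finally have "(\<integral>\<omega>. f \<omega> \<partial>M) = treated_prob" .
  moreover have "(\<integral>\<omega>. X2 \<omega> * f \<omega> \<partial>M) = (\<integral>\<omega>. X2 \<omega> * cexpX M X2 f \<omega> \<partial>M)"
    unfolding cexpX_def
    using integrable_mult_bounded[OF f X2_measurable abs_X2_le_1]
    by (intro given_X.real_cond_exp_intg(2)[symmetric]) (simp_all add: mult.commute)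
  moreover have "\<dots> = treated_prob"
    unfolding integral_X2_square[symmetric]
    by (rule integral_cong_AE) (use ae in \<open>auto simp: cexpX_def\<close>)
  ultimately show "(\<integral>\<omega>. f \<omega> \<partial>M) = treated_prob \<and> (\<integral>\<omega>. X2 \<omega> * f \<omega> \<partial>M) = treated_prob"
    by simp
next
  assume moments: "(\<integral>\<omega>. f \<omega> \<partial>M) = treated_prob \<and> (\<integral>\<omega>. X2 \<omega> * f \<omega> \<partial>M) = treated_prob"
  have "AE \<omega> in M. real_cond_exp M (vimage_algebra (space M) (Xvec X2) borel) f \<omega> = X2 \<omega>"
  proof (rule given_X.real_cond_exp_charact)
    fix A assume "A \<in> sets (vimage_algebra (space M) (Xvec X2) borel)"
    then obtain B where "A = Xvec X2 -` B \<inter> space M"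
      by (auto simp: sets_vimage_algebra2)
    then show "(\<integral>\<omega>\<in>A. f \<omega> \<partial>M) = (\<integral>\<omega>\<in>A. X2 \<omega> \<partial>M)"
      using moments set_integral_Xvec_preimage[OF f] set_integral_Xvec_preimage[OF integrable_X2]
      by (simp add: integral_X2 integral_X2_square)
  qed (simp_all add: f)
  then show "AE \<omega> in M. cexpX M X2 f \<omega> = X2 \<omega>"
    by (simp add: cexpX_def)
qed

lemma solves_X2_iff:
  assumes "L2Z M Z N h"
  shows "solves M X2 Z N X2 h
    \<longleftrightarrow> (\<integral>\<omega>. h (Z \<omega>) \<partial>M) = treated_prob \<and> (\<integral>\<omega>. h (Z \<omega>) * \<pi> (Z \<omega>) \<partial>M) = treated_prob"
proof -
  have h [measurable]: "h \<in> borel_measurable N" and sq: "integrable M (\<lambda>\<omega>. (h (Z \<omega>))\<^sup>2)"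
    using assms by (simp_all add: L2Z_def)
  have hZ: "integrable M (\<lambda>\<omega>. h (Z \<omega>))"
    by (rule square_integrable_imp_integrable[OF _ sq]) measurable
  have "(\<integral>\<omega>. X2 \<omega> * h (Z \<omega>) \<partial>M) = (\<integral>\<omega>. h (Z \<omega>) * \<pi> (Z \<omega>) \<partial>M)"
    using integral_mult_X2_eq_mult_propensity[OF h hZ] by (simp only: mult.commute)
  then show ?thesis
    using assms cond_exp_given_X_eq_X2_iff[OF hZ] unfolding solves_def by simp
qed

lemma solves_const_one: "solves M X2 Z N (\<lambda>_. 1) (\<lambda>_. 1)"
proof -
  have "AE \<omega> in M. real_cond_exp M (vimage_algebra (space M) (Xvec X2) borel) (\<lambda>_. 1) \<omega> = 1"
    by (rule given_X.real_cond_exp_F_meas) simp_all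
  then show ?thesis
    by (simp add: solves_def L2Z_def cexpX_def)
qed

lemma L2Z_affine_propensity: "L2Z M Z N (\<lambda>z. a + b * \<pi> z)"
proof -
  have bounded: "AE \<omega> in M. \<bar>a + b * \<pi> (Z \<omega>)\<bar> \<le> \<bar>a\<bar> + \<bar>b\<bar>"
    using abs_propensity_le_1
  proof eventually_elim
    case (elim \<omega>)
    then have "\<bar>b * \<pi> (Z \<omega>)\<bar> \<le> \<bar>b\<bar>"
      by (simp add: abs_mult mult_left_le)
    then show ?case
      using abs_triangle_ineq[of a "b * \<pi> (Z \<omega>)"] by linarith
  qed
  have "integrable M (\<lambda>\<omega>. (a + b * \<pi> (Z \<omega>)) * (a + b * \<pi> (Z \<omega>)))"
    by (rule integrable_mult_bounded[OF _ _ bounded]) simp_all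
  then show ?thesis
    by (simp add: L2Z_def power2_eq_square)
qed

lemma integral_solution_mult_affine_propensity:
  assumes "solves M X2 Z N X2 h"
  shows "(\<integral>\<omega>. h (Z \<omega>) * (a + b * \<pi> (Z \<omega>)) \<partial>M) = (a + b) * treated_prob"
proof -
  have L2: "L2Z M Z N h"
    using assms by (simp add: solves_def)
  then have h [measurable]: "h \<in> borel_measurable N" and sq: "integrable M (\<lambda>\<omega>. (h (Z \<omega>))\<^sup>2)"
    by (simp_all add: L2Z_def)
  have moments: "(\<integral>\<omega>. h (Z \<omega>) \<partial>M) = treated_prob" "(\<integral>\<omega>. h (Z \<omega>) * \<pi> (Z \<omega>) \<partial>M) = treated_prob"
    using assms unfolding solves_X2_iff[OF L2] by simp_all
  have hZ: "integrable M (\<lambda>\<omega>. h (Z \<omega>))"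
    by (rule square_integrable_imp_integrable[OF _ sq]) measurable
  have hZ_\<pi>: "integrable M (\<lambda>\<omega>. h (Z \<omega>) * \<pi> (Z \<omega>))"
    by (rule integrable_mult_bounded[OF hZ _ abs_propensity_le_1]) simp
  have "(\<integral>\<omega>. h (Z \<omega>) * (a + b * \<pi> (Z \<omega>)) \<partial>M)
      = (\<integral>\<omega>. a * h (Z \<omega>) + b * (h (Z \<omega>) * \<pi> (Z \<omega>)) \<partial>M)"
    by (simp add: algebra_simps)
  also have "\<dots> = (a + b) * treated_prob"
    using hZ hZ_\<pi> moments by (simp add: algebra_simps)
  finally show ?thesis .
qed

lemma solves_X2_affine_propensity:
  assumes var_pos: "var M (\<lambda>\<omega>. \<pi> (Z \<omega>)) > 0"
    and \<gamma>: "\<gamma> = treated_prob * (1 - treated_prob) / var M (\<lambda>\<omega>. \<pi> (Z \<omega>))"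
    and \<alpha>: "\<alpha> = treated_prob * (1 - \<gamma>)"
  shows "solves M X2 Z N X2 (\<lambda>z. \<alpha> + \<gamma> * \<pi> z)"
proof -
  have "(\<integral>\<omega>. \<alpha> + \<gamma> * \<pi> (Z \<omega>) \<partial>M) = treated_prob"
    using integral_propensity by (simp add: \<alpha> algebra_simps prob_space)
  moreover have "(\<integral>\<omega>. (\<alpha> + \<gamma> * \<pi> (Z \<omega>)) * \<pi> (Z \<omega>) \<partial>M) = treated_prob"
  proof -
    have "(\<integral>\<omega>. (\<alpha> + \<gamma> * \<pi> (Z \<omega>)) * \<pi> (Z \<omega>) \<partial>M)
        = (\<integral>\<omega>. \<alpha> * \<pi> (Z \<omega>) + \<gamma> * (\<pi> (Z \<omega>) * \<pi> (Z \<omega>)) \<partial>M)"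
      by (simp add: algebra_simps)
    also have "\<dots> = \<alpha> * treated_prob + \<gamma> * (var M (\<lambda>\<omega>. \<pi> (Z \<omega>)) + treated_prob\<^sup>2)"
      using integrable_propensity_square
      by (simp add: integral_propensity integral_propensity_square)
    also have "\<dots> = treated_prob"
      using var_pos by (simp add: \<alpha> \<gamma> field_simps power2_eq_square)
    finally show ?thesis .
  qed
  ultimately show ?thesis
    using solves_X2_iff[OF L2Z_affine_propensity] by simp
qed

lemma min_norm_solution_X2:
  assumes "var M (\<lambda>\<omega>. \<pi> (Z \<omega>)) > 0"
    and "\<gamma> = treated_prob * (1 - treated_prob) / var M (\<lambda>\<omega>. \<pi> (Z \<omega>))"
    and "\<alpha> = treated_prob * (1 - \<gamma>)"
  shows "min_norm_solution M X2 Z N X2 (\<lambda>z. \<alpha> + \<gamma> * \<pi> z)"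
    and "min_norm_solution M X2 Z N X2 h \<Longrightarrow> AE \<omega> in M. h (Z \<omega>) = \<alpha> + \<gamma> * \<pi> (Z \<omega>)"
proof -
  note sol = solves_X2_affine_propensity[OF assms]
  have orth: "(\<integral>\<omega>. h (Z \<omega>) * (\<alpha> + \<gamma> * \<pi> (Z \<omega>)) \<partial>M) = (\<integral>\<omega>. (\<alpha> + \<gamma> * \<pi> (Z \<omega>))\<^sup>2 \<partial>M)"
    if "solves M X2 Z N X2 h" for h
    using integral_solution_mult_affine_propensity[OF that]
      integral_solution_mult_affine_propensity[OF sol]
    by (simp add: power2_eq_square)
  show "min_norm_solution M X2 Z N X2 (\<lambda>z. \<alpha> + \<gamma> * \<pi> z)"
    and "min_norm_solution M X2 Z N X2 h \<Longrightarrow> AE \<omega> in M. h (Z \<omega>) = \<alpha> + \<gamma> * \<pi> (Z \<omega>)"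
    using min_norm_solution_if_orthogonal[OF Z_measurable sol orth] by simp_all
qed

lemma fun_Xvec_eq_affine:
  "\<omega> \<in> space M \<Longrightarrow> g (Xvec X2 \<omega>) = g (vector [1, 0]) + (g (vector [1, 1]) - g (vector [1, 0])) * X2 \<omega>"
  using X2_binary by (auto simp: Xvec_def)

lemma ols_coefficients:
  assumes "0 < treated_prob" "treated_prob < 1"
  shows "matrix_inv (\<chi> i j. \<integral>\<omega>. Xvec X2 \<omega> $ i * Xvec X2 \<omega> $ j \<partial>M)
      *v (\<chi> i. \<integral>\<omega>. Xvec X2 \<omega> $ i * g (Xvec X2 \<omega>) \<partial>M)
    = vector [g (vector [1, 0]), g (vector [1, 1]) - g (vector [1, 0])]"
proof -
  define c0 d where "c0 = g (vector [1, 0])" and "d = g (vector [1, 1]) - g (vector [1, 0])"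
  define A where "A = (\<chi> i j. \<integral>\<omega>. Xvec X2 \<omega> $ i * Xvec X2 \<omega> $ j \<partial>M)"
  have X_1: "Xvec X2 \<omega> $ 1 = 1" and X_2: "Xvec X2 \<omega> $ 2 = X2 \<omega>" for \<omega>
    by (simp_all add: Xvec_def)
  have A: "A $ 1 $ 1 = 1" "A $ 1 $ 2 = treated_prob" "A $ 2 $ 1 = treated_prob" "A $ 2 $ 2 = treated_prob"
    unfolding A_def by (simp_all add: X_1 X_2 integral_X2 integral_X2_square prob_space)
  have Eg: "(\<integral>\<omega>. g (Xvec X2 \<omega>) \<partial>M) = c0 + d * treated_prob"
  proof -
    have "(\<integral>\<omega>. g (Xvec X2 \<omega>) \<partial>M) = (\<integral>\<omega>. c0 + d * X2 \<omega> \<partial>M)"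
      by (rule Bochner_Integration.integral_cong) (simp_all add: fun_Xvec_eq_affine c0_def d_def)
    then show ?thesis by (simp add: integral_X2 prob_space)
  qed
  have EX2g: "(\<integral>\<omega>. X2 \<omega> * g (Xvec X2 \<omega>) \<partial>M) = c0 * treated_prob + d * treated_prob"
  proof -
    have "(\<integral>\<omega>. X2 \<omega> * g (Xvec X2 \<omega>) \<partial>M) = (\<integral>\<omega>. c0 * X2 \<omega> + d * (X2 \<omega> * X2 \<omega>) \<partial>M)"
      by (rule Bochner_Integration.integral_cong) (simp_all add: fun_Xvec_eq_affine c0_def d_def algebra_simps)
    then show ?thesis
      using integrable_X2_square by (simp add: integral_X2 integral_X2_square)
  qed
  have moments: "(\<chi> i. \<integral>\<omega>. Xvec X2 \<omega> $ i * g (Xvec X2 \<omega>) \<partial>M) = A *v vector [c0, d]"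
    by (simp add: vec_eq_iff forall_2 matrix_vector_mult_def sum_2 A X_1 X_2 Eg EX2g algebra_simps)
  have "det A = treated_prob * (1 - treated_prob)"
    by (simp add: det_2 A algebra_simps)
  then have "invertible A"
    using assms by (simp add: invertible_det_nz)
  then show ?thesis
    unfolding moments A_def[symmetric] c0_def d_def by (rule matrix_inv_mult_vector_cancel)
qed

lemma moments_if_cond_exp_given_Z_eq_0:
  assumes \<epsilon>: "integrable M \<epsilon>" and cond_exp: "AE \<omega> in M. cexpZ M Z N \<epsilon> \<omega> = 0"
  shows "expectation \<epsilon> = 0" and "(\<integral>\<omega>. \<pi> (Z \<omega>) * \<epsilon> \<omega> \<partial>M) = 0"
proof -
  have [measurable]: "\<epsilon> \<in> borel_measurable M"
    using \<epsilon> by (rule borel_measurable_integrable)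
  note cond_exp = cond_exp[unfolded cexpZ_def]
  have "(\<integral>\<omega>. 1 * \<epsilon> \<omega> \<partial>M) = 0"
    by (rule given_Z.integral_mult_eq_0_if_real_cond_exp_eq_0[OF cond_exp]) (simp_all add: \<epsilon>)
  then show "expectation \<epsilon> = 0"
    by simp
  have "integrable M (\<lambda>\<omega>. \<pi> (Z \<omega>) * \<epsilon> \<omega>)"
    using integrable_mult_bounded[OF \<epsilon> _ abs_propensity_le_1] by (simp add: mult.commute)
  then show "(\<integral>\<omega>. \<pi> (Z \<omega>) * \<epsilon> \<omega> \<partial>M) = 0"
    by (rule given_Z.integral_mult_eq_0_if_real_cond_exp_eq_0[OF cond_exp])
      (simp_all add: measurable_comp_Z_given_Z)
qed

lemma iv_moments:
  assumes Y: "Y \<in> borel_measurable M" and Y_sq: "integrable M (\<lambda>\<omega>. (Y \<omega>)\<^sup>2)"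
    and model: "AE \<omega> in M. cexpZ M Z N (\<lambda>\<omega>. Y \<omega> - g (Xvec X2 \<omega>)) \<omega> = 0"
  shows "expectation Y = g (vector [1, 0]) + (g (vector [1, 1]) - g (vector [1, 0])) * treated_prob"
    and "cov M Y (\<lambda>\<omega>. \<pi> (Z \<omega>)) = (g (vector [1, 1]) - g (vector [1, 0])) * var M (\<lambda>\<omega>. \<pi> (Z \<omega>))"
proof -
  define c0 d where "c0 = g (vector [1, 0])" and "d = g (vector [1, 1]) - g (vector [1, 0])"
  define \<epsilon> where "\<epsilon> \<omega> = Y \<omega> - g (Xvec X2 \<omega>)" for \<omega>
  have Y_eq: "Y \<omega> = \<epsilon> \<omega> + (c0 + d * X2 \<omega>)" if "\<omega> \<in> space M" for \<omega>
    using fun_Xvec_eq_affine[OF that] by (simp add: \<epsilon>_def c0_def d_def)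
  have Y_int: "integrable M Y"
    by (rule square_integrable_imp_integrable[OF Y Y_sq])
  have \<epsilon>_int: "integrable M \<epsilon>"
  proof -
    have "integrable M (\<lambda>\<omega>. Y \<omega> - (c0 + d * X2 \<omega>))"
      using Y_int by simp
    then show ?thesis
      by (rule Bochner_Integration.integrable_cong[THEN iffD1, rotated 2]) (simp_all add: Y_eq)
  qed
  note \<epsilon>_moments = moments_if_cond_exp_given_Z_eq_0[OF \<epsilon>_int model[folded \<epsilon>_def]]
  have \<pi>\<epsilon>_int: "integrable M (\<lambda>\<omega>. \<pi> (Z \<omega>) * \<epsilon> \<omega>)"
    using integrable_mult_bounded[OF \<epsilon>_int _ abs_propensity_le_1] by (simp add: mult.commute)
  have EY: "expectation Y = c0 + d * treated_prob"
  proof -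
    have "expectation Y = (\<integral>\<omega>. \<epsilon> \<omega> + (c0 + d * X2 \<omega>) \<partial>M)"
      by (rule Bochner_Integration.integral_cong) (simp_all add: Y_eq)
    then show ?thesis
      using \<epsilon>_int \<epsilon>_moments by (simp add: integral_X2 prob_space)
  qed
  then show "expectation Y = c0 + d * treated_prob" .
  have "(\<integral>\<omega>. Y \<omega> * \<pi> (Z \<omega>) \<partial>M)
      = (\<integral>\<omega>. \<pi> (Z \<omega>) * \<epsilon> \<omega> + (c0 * \<pi> (Z \<omega>) + d * (X2 \<omega> * \<pi> (Z \<omega>))) \<partial>M)"
    by (rule Bochner_Integration.integral_cong) (simp_all add: Y_eq algebra_simps)
  also have "\<dots> = c0 * treated_prob + d * (var M (\<lambda>\<omega>. \<pi> (Z \<omega>)) + treated_prob\<^sup>2)"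
    using \<pi>\<epsilon>_int \<epsilon>_moments integrable_X2_mult_propensity
    by (simp add: integral_propensity integral_X2_mult_propensity)
  finally have EY\<pi>: "(\<integral>\<omega>. Y \<omega> * \<pi> (Z \<omega>) \<partial>M)
      = c0 * treated_prob + d * (var M (\<lambda>\<omega>. \<pi> (Z \<omega>)) + treated_prob\<^sup>2)" .
  have Y\<pi>_int: "integrable M (\<lambda>\<omega>. Y \<omega> * \<pi> (Z \<omega>))"
    by (rule integrable_mult_bounded[OF Y_int _ abs_propensity_le_1]) simp
  show "cov M Y (\<lambda>\<omega>. \<pi> (Z \<omega>)) = d * var M (\<lambda>\<omega>. \<pi> (Z \<omega>))"
    using cov_eq_integral_mult_diff[OF Y_int integrable_propensity Y\<pi>_int]
    by (simp add: EY EY\<pi> integral_propensity algebra_simps power2_eq_square)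
qed

end

theorem proposition3:
  fixes M :: "'a measure" and N :: "'b measure"
    and Y X2 :: "'a \<Rightarrow> real" and Z :: "'a \<Rightarrow> 'b"
    and g :: "real^2 \<Rightarrow> real" and \<pi> :: "'b \<Rightarrow> real"
    and \<pi>bar \<gamma> \<alpha> \<alpha>IV cIV :: real and \<beta> :: "real^2"
  assumes prob: "prob_space M"
    and Y_meas: "Y \<in> borel_measurable M"
    and Y_sq: "integrable M (\<lambda>\<omega>. (Y \<omega>)\<^sup>2)"
    and X2_meas: "X2 \<in> borel_measurable M"
    and X2_bin: "\<forall>\<omega>\<in>space M. X2 \<omega> \<in> {0, 1}"
    and Z_meas: "Z \<in> measurable M N"
    and g_meas: "g \<in> borel_measurable borel"
    and g_L2: "integrable M (\<lambda>\<omega>. (g (Xvec X2 \<omega>))\<^sup>2)"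
    and model: "AE \<omega> in M. cexpZ M Z N (\<lambda>\<omega>. Y \<omega> - g (Xvec X2 \<omega>)) \<omega> = 0"
    and \<pi>_meas: "\<pi> \<in> borel_measurable N"
    and \<pi>_def: "AE \<omega> in M. \<pi> (Z \<omega>) = cexpZ M Z N (\<lambda>\<omega>. if X2 \<omega> = 1 then 1 else 0) \<omega>"
    and \<pi>bar_def: "\<pi>bar = measure M {\<omega> \<in> space M. X2 \<omega> = 1}"
    and \<pi>bar_pos: "0 < \<pi>bar" and \<pi>bar_lt1: "\<pi>bar < 1"
    and var_pos: "var M (\<lambda>\<omega>. \<pi> (Z \<omega>)) > 0"
    and \<gamma>_def: "\<gamma> = \<pi>bar * (1 - \<pi>bar) / var M (\<lambda>\<omega>. \<pi> (Z \<omega>))"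
    and \<alpha>_def: "\<alpha> = \<pi>bar * (1 - \<gamma>)"
    and \<beta>_def: "\<beta> = matrix_inv (\<chi> i j. \<integral>\<omega>. Xvec X2 \<omega> $ i * Xvec X2 \<omega> $ j \<partial>M)
                     *v (\<chi> i. \<integral>\<omega>. Xvec X2 \<omega> $ i * g (Xvec X2 \<omega>) \<partial>M)"
    and \<alpha>IV_def: "\<alpha>IV = cov M Y (\<lambda>\<omega>. \<pi> (Z \<omega>)) / cov M X2 (\<lambda>\<omega>. \<pi> (Z \<omega>))"
    and cIV_def: "cIV = (\<integral>\<omega>. Y \<omega> \<partial>M) - \<alpha>IV * \<pi>bar"
  shows "(\<exists>h1 h2. solves M X2 Z N (\<lambda>\<omega>. 1) h1 \<and> solves M X2 Z N X2 h2)
       \<and> min_norm_solution M X2 Z N X2 (\<lambda>z. \<alpha> + \<gamma> * \<pi> z)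
       \<and> (\<forall>h0. min_norm_solution M X2 Z N X2 h0 \<longrightarrow>
              (AE \<omega> in M. h0 (Z \<omega>) = \<alpha> + \<gamma> * \<pi> (Z \<omega>)))
       \<and> \<beta> = vector [cIV, \<alpha>IV]"
proof -
  interpret binary_treatment M N X2 Z \<pi>
    using prob X2_meas X2_bin Z_meas \<pi>_meas \<pi>_def
    by (simp add: binary_treatment_def binary_treatment_axioms_def)
  have \<pi>bar: "\<pi>bar = treated_prob"
    by (simp add: \<pi>bar_def treated_prob_def)
  note coefficients = var_pos \<gamma>_def[unfolded \<pi>bar] \<alpha>_def[unfolded \<pi>bar]
  note min_norm = min_norm_solution_X2[OF coefficients]
  have iv: "\<alpha>IV = g (vector [1, 1]) - g (vector [1, 0])" "cIV = g (vector [1, 0])"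
    using iv_moments[OF Y_meas Y_sq model] var_pos
    by (simp_all add: \<alpha>IV_def cIV_def cov_X2_propensity \<pi>bar)
  show ?thesis
  proof (intro conjI)
    show "\<exists>h1 h2. solves M X2 Z N (\<lambda>\<omega>. 1) h1 \<and> solves M X2 Z N X2 h2"
      using solves_const_one solves_X2_affine_propensity[OF coefficients] by blast
    show "min_norm_solution M X2 Z N X2 (\<lambda>z. \<alpha> + \<gamma> * \<pi> z)"
      by (rule min_norm(1))
    show "\<forall>h0. min_norm_solution M X2 Z N X2 h0 \<longrightarrow> (AE \<omega> in M. h0 (Z \<omega>) = \<alpha> + \<gamma> * \<pi> (Z \<omega>))"
      using min_norm(2) by blast
    show "\<beta> = vector [cIV, \<alpha>IV]"
      unfolding \<beta>_def iv by (rule ols_coefficients[OF \<pi>bar_pos[unfolded \<pi>bar] \<pi>bar_lt1[unfolded \<pi>bar]])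
  qed
qed

end
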